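(* Let $w,w'\in[0,1]$ with $w+w'=1$. For any $\bar{\textbf{A}}=(\textbf{A}_1,\dots,\textbf{A}_n)^T$, $\bar{\textbf{B}}=(\textbf{B}_1,\dots,\textbf{B}_n)^T\in I(\mathbb{R})^n$ and $h\in\mathbb{R}^n$, \[\textbf{0}\preceq h^T\odot(\bar{\textbf{A}}\ominus_{gH}\bar{\textbf{B}})\ \Longrightarrow\ (\mathcal{W}(\bar{\textbf{A}})-\mathcal{W}(\bar{\textbf{B}}))^Th\ge0.\]
   Context: $I(\mathbb{R})$: closed bounded intervals $\textbf{A}=[\underline{a},\overline{a}]$ with Moore arithmetic ($\oplus$ endpointwise; $\lambda\odot\textbf{A}=[\lambda\underline{a},\lambda\overline{a}]$ if $\lambda\ge0$, $[\lambda\overline{a},\lambda\underline{a}]$ if $\lambda<0$); $\textbf{A}\ominus_{gH}\textbf{B}=[\min\{\underline{a}-\underline{b},\overline{a}-\overline{b}\},\max\{\underline{a}-\underline{b},\overline{a}-\overline{b}\}]$, applied componentwise on $I(\mathbb{R})^n$. For $h\in\mathbb{R}^n$ and $\bar{\textbf{C}}\in I(\mathbb{R})^n$, $h^T\odot\bar{\textbf{C}}=\bigoplus_{i=1}^n h_i\odot\textbf{C}_i$. $\textbf{A}\preceq\textbf{B}$ iff $\underline{a}\le\underline{b}$ and $\overline{a}\le\overline{b}$; $\textbf{0}=[0,0]$. $\mathcal{W}:I(\mathbb{R})^n\to\mathbb{R}^n$, $\mathcal{W}(\textbf{A}_1,\dots,\textbf{A}_n)=(w\underline{a}_1+w'\overline{a}_1,\dots,w\underline{a}_n+w'\overline{a}_n)^T$.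 *)

theory Defs
  imports Complex_Main
begin

text \<open>Closed bounded intervals [lo, hi] represented as pairs (lo, hi); membership in
  I(R) is the predicate is_interval_pair. Vectors in I(R)^n and R^n are represented as
  functions on indices 0..<n.\<close>

type_synonym ivl = "real \<times> real"

definition is_ivl :: "ivl \<Rightarrow> bool" where
  "is_ivl A \<longleftrightarrow> fst A \<le> snd A"

definition ivl_add :: "ivl \<Rightarrow> ivl \<Rightarrow> ivl" where
  "ivl_add A B = (fst A + fst B, snd A + snd B)"

definition ivl_scale :: "real \<Rightarrow> ivl \<Rightarrow> ivl" where
  "ivl_scale l A = (if l \<ge> 0 then (l * fst A, l * snd A) else (l * snd A, l * fst A))"

definition ivl_gH_diff :: "ivl \<Rightarrow> ivl \<Rightarrow> ivl" where
  "ivl_gH_diff A B = (min (fst A - fst B) (snd A - snd B), max (fst A - fst B) (snd A - snd B))"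

definition ivl_le :: "ivl \<Rightarrow> ivl \<Rightarrow> bool" where
  "ivl_le A B \<longleftrightarrow> fst A \<le> fst B \<and> snd A \<le> snd B"

definition ivl_zero :: ivl where
  "ivl_zero = (0, 0)"

fun ivl_dot :: "nat \<Rightarrow> (nat \<Rightarrow> real) \<Rightarrow> (nat \<Rightarrow> ivl) \<Rightarrow> ivl" where
  "ivl_dot 0 h C = ivl_zero"
| "ivl_dot (Suc 0) h C = ivl_scale (h 0) (C 0)"
| "ivl_dot (Suc (Suc m)) h C = ivl_add (ivl_dot (Suc m) h C) (ivl_scale (h (Suc m)) (C (Suc m)))"

definition ivl_vec_gH_diff :: "(nat \<Rightarrow> ivl) \<Rightarrow> (nat \<Rightarrow> ivl) \<Rightarrow> (nat \<Rightarrow> ivl)" where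
  "ivl_vec_gH_diff A B = (\<lambda>i. ivl_gH_diff (A i) (B i))"

definition W_map :: "real \<Rightarrow> real \<Rightarrow> (nat \<Rightarrow> ivl) \<Rightarrow> (nat \<Rightarrow> real)" where
  "W_map w w' A = (\<lambda>i. w * fst (A i) + w' * snd (A i))"

end

theory Submission
  imports Defs
begin

text \<open>The lower endpoint of \<open>h\<^sup>T \<odot> (A \<ominus>\<^sub>g\<^sub>H B)\<close> is
  \<open>\<Sum>\<^sub>i min (h\<^sub>i (a\<^sub>i - b\<^sub>i)) (h\<^sub>i (a'\<^sub>i - b'\<^sub>i))\<close>, where \<open>a\<^sub>i, a'\<^sub>i\<close> and \<open>b\<^sub>i, b'\<^sub>i\<close> are the
  endpoints of \<open>A\<^sub>i\<close> and \<open>B\<^sub>i\<close>. Each minimum lies below the convex combination with weights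
  \<open>w, w'\<close> of its two arguments, and that combination is the \<open>i\<close>-th term of
  \<open>(W(A) - W(B))\<^sup>T h\<close>. So a nonnegative lower endpoint forces a nonnegative sum.\<close>

lemma fst_ivl_dot: "fst (ivl_dot n h C) = (\<Sum>i<n. fst (ivl_scale (h i) (C i)))"
proof (induction n h C rule: ivl_dot.induct)
  case (3 m h C)
  then show ?case by (simp add: ivl_add_def)
qed (simp_all add: ivl_zero_def)

lemma is_ivl_gH_diff: "is_ivl (ivl_gH_diff A B)"
  by (simp add: is_ivl_def ivl_gH_diff_def)

lemma fst_ivl_scale:
  assumes "is_ivl A"
  shows "fst (ivl_scale l A) = min (l * fst A) (l * snd A)"
  using assms mult_left_mono[of "fst A" "snd A" l] mult_left_mono_neg[of "fst A" "snd A" l]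
  by (auto simp: is_ivl_def ivl_scale_def min_def)

lemma fst_ivl_scale_gH_diff:
  "fst (ivl_scale l (ivl_gH_diff A B)) = min (l * (fst A - fst B)) (l * (snd A - snd B))"
  unfolding fst_ivl_scale[OF is_ivl_gH_diff]
  by (cases "fst A - fst B \<le> snd A - snd B") (auto simp: ivl_gH_diff_def min.commute)

lemma min_le_convex_combination:
  fixes x y u v :: "'a :: linordered_semiring_1"
  assumes "0 \<le> u" "0 \<le> v" "u + v = 1"
  shows "min x y \<le> u * x + v * y"
proof -
  have "min x y = u * min x y + v * min x y"
    by (metis assms(3) distrib_right mult_1)
  also have "\<dots> \<le> u * x + v * y"
    using assms by (intro add_mono mult_left_mono) auto
  finally show ?thesis .
qed

theorem lemma5p2:
  fixes w w' :: real and n :: nat and A B :: "nat \<Rightarrow> ivl" and h :: "nat \<Rightarrow> real"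
  assumes "0 \<le> w" "w \<le> 1" "0 \<le> w'" "w' \<le> 1" "w + w' = 1"
    and "n \<ge> 1"
    and "\<forall>i<n. is_ivl (A i)" and "\<forall>i<n. is_ivl (B i)"
    and "ivl_le ivl_zero (ivl_dot n h (ivl_vec_gH_diff A B))"
  shows "(\<Sum>i<n. (W_map w w' A i - W_map w w' B i) * h i) \<ge> 0"
proof -
  have "0 \<le> fst (ivl_dot n h (ivl_vec_gH_diff A B))"
    using assms(9) by (simp add: ivl_le_def ivl_zero_def)
  also have "\<dots> = (\<Sum>i<n. min (h i * (fst (A i) - fst (B i))) (h i * (snd (A i) - snd (B i))))"
    by (simp add: fst_ivl_dot ivl_vec_gH_diff_def fst_ivl_scale_gH_diff)
  also have "\<dots> \<le> (\<Sum>i<n. w * (h i * (fst (A i) - fst (B i))) + w' * (h i * (snd (A i) - snd (B i))))"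
    using assms(1,3,5) by (intro sum_mono min_le_convex_combination)
  also have "\<dots> = (\<Sum>i<n. (W_map w w' A i - W_map w w' B i) * h i)"
    by (simp add: W_map_def algebra_simps)
  finally show ?thesis .
qed

end
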